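(* Let $L$ be a finite lattice and $\varphi\in M_1(L)$. Then $\lambda(\varphi;a,b)=B_\varphi(\langle a,b\rangle^* )$ for every pair $\{a,b\}$ of elements of $L$.
   Context: $L$ is a finite lattice with join $\vee$ and meet $\wedge$. $M_1(L)$ is the set of nonnegative monotone real functions on $L$. A path from $a$ to $b$ is a sequence $H=(h_0,\dots,h_m)$ of distinct elements of $L$ with $h_0=a$, $h_m=b$ ($m\ge 0$); $\varphi(H)=\sum_{i=0}^m\varphi(h_i)-\sum_{i=1}^m\varphi(h_{i-1}\vee h_i)$, and $\lambda(\varphi;a,b)=\max\{\varphi(H):H\text{ a path from }a\text{ to }b\}$. For $A\subseteq L$, $\langle A\rangle^*=\{x:x\ge a\text{ for some }a\in A\}$; $\langle a,b\rangle^*=\langle\{a,b\}\rangle^*$, $\langle x\rangle^*=\langle\{x\}\rangle^*$. $\mathcal L$ is the set of nonempty up-sets of $L$ ordered by $U\preceq V$ iff $U\supseteq V$ (meet = union). $M_\infty(\mathcal L)$ is the set of nonnegative completely monotone functions on $(\mathcal L,\preceq)$ (all iterated differences $\nabla_U\Phi(W)=\Phi(W)-\Phi(W\wedge U)$ nonnegative). $B_\varphi(U)=\min\{\Phi(U):\Phi\in M_\infty(\mathcal L),\ \Phi(\langle x\rangle^* )=\varphi(x)\ \forall x\in L\}$. *)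

theory Defs
  imports Main "HOL.Real"
begin

definition M1 :: "('a::lattice \<Rightarrow> real) set" where
  "M1 = {\<phi>. mono \<phi> \<and> (\<forall>x. 0 \<le> \<phi> x)}"

definition is_path :: "'a \<Rightarrow> 'a \<Rightarrow> 'a list \<Rightarrow> bool" where
  "is_path a b H \<longleftrightarrow> H \<noteq> [] \<and> distinct H \<and> hd H = a \<and> last H = b"

definition path_val :: "('a::lattice \<Rightarrow> real) \<Rightarrow> 'a list \<Rightarrow> real" where
  "path_val \<phi> H = sum_list (map \<phi> H) - sum_list (map (\<lambda>(x, y). \<phi> (sup x y)) (zip H (tl H)))"

definition lam :: "('a::{finite,lattice} \<Rightarrow> real) \<Rightarrow> 'a \<Rightarrow> 'a \<Rightarrow> real" where
  "lam \<phi> a b = Max {path_val \<phi> H | H. is_path a b H}"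

definition upcl :: "'a::order set \<Rightarrow> 'a set" where
  "upcl A = {x. \<exists>a\<in>A. a \<le> x}"

text \<open>Nonempty up-sets of L (the carrier of the lattice \<L>, ordered by reverse inclusion, meet = union).\<close>
definition upsets :: "'a::order set set" where
  "upsets = {U. U \<noteq> {} \<and> (\<forall>x\<in>U. \<forall>y. x \<le> y \<longrightarrow> y \<in> U)}"

text \<open>Iterated differences: nabla (U1 # Us) \<Phi> W = nabla Us \<Phi> W - nabla Us \<Phi> (W \<union> U1),
  where W \<union> U1 is the meet of W and U1 in \<L>.\<close>
fun nabla :: "'a set list \<Rightarrow> ('a set \<Rightarrow> real) \<Rightarrow> 'a set \<Rightarrow> real" where
  "nabla [] \<Phi> W = \<Phi> W"
| "nabla (U # Us) \<Phi> W = nabla Us \<Phi> W - nabla Us \<Phi> (W \<union> U)"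

text \<open>Nonnegative completely monotone functions on \<L> (only values on upsets matter).\<close>
definition Minf :: "('a::order set \<Rightarrow> real) set" where
  "Minf = {\<Phi>. (\<forall>W\<in>upsets. 0 \<le> \<Phi> W) \<and>
              (\<forall>Us W. set Us \<subseteq> upsets \<longrightarrow> W \<in> upsets \<longrightarrow> 0 \<le> nabla Us \<Phi> W)}"

definition Bphi :: "('a::order \<Rightarrow> real) \<Rightarrow> 'a set \<Rightarrow> real" where
  "Bphi \<phi> U = (LEAST r. \<exists>\<Phi>\<in>Minf. (\<forall>x. \<Phi> (upcl {x}) = \<phi> x) \<and> r = \<Phi> U)"

end

theory Submission
  imports Defs
begin

text \<open>
  For the lower bound, complete monotonicity of degree two makes any admissible \<open>\<Phi>\<close>
  antitone and supermodular on up-sets; walking along a path \<open>H\<close> from \<open>a\<close> to \<open>b\<close> and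
  absorbing one element at a time shows \<open>\<phi>(H) \<le> \<Phi>(\<langle>H\<rangle>\<^sup>*) \<le> \<Phi>(\<langle>a,b\<rangle>\<^sup>*)\<close>.
  For the upper bound, split \<open>\<phi> = \<lambda>(\<cdot>;b) + (\<phi> - \<lambda>(\<cdot>;b))\<close> into two nonnegative monotone
  functions and extend each to up-sets by taking its minimum over the up-set. A minimum of a
  nonnegative function over an up-set is completely monotone, the extension takes the value
  \<open>\<phi>(x)\<close> on \<open>\<langle>x\<rangle>\<^sup>*\<close>, and on \<open>\<langle>a,b\<rangle>\<^sup>*\<close> it is at most \<open>\<lambda>(\<phi>;a,b) + (\<phi>(b) - \<lambda>(\<phi>;b,b)) = \<lambda>(\<phi>;a,b)\<close>.
\<close>

lemma path_val_singleton [simp]: "path_val \<phi> [x] = \<phi> x"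
  by (simp add: path_val_def)

lemma path_val_Cons_Cons:
  "path_val \<phi> (x # y # H) = \<phi> x + path_val \<phi> (y # H) - \<phi> (sup x y)"
  by (simp add: path_val_def)

lemma path_val_append_Cons:
  "path_val \<phi> (P @ c # Q) = path_val \<phi> (P @ [c]) + path_val \<phi> (c # Q) - \<phi> c"
proof (induction P)
  case Nil
  then show ?case by simp
next
  case (Cons p P)
  then show ?case by (cases P) (simp_all add: path_val_Cons_Cons)
qed

lemma path_val_le_hd_last:
  assumes "mono \<phi>" and "H \<noteq> []"
  shows "path_val \<phi> H \<le> \<phi> (hd H) \<and> path_val \<phi> H \<le> \<phi> (last H)"
  using \<open>H \<noteq> []\<close>
proof (induction H rule: list_nonempty_induct)
  case (single x)
  then show ?case by simp
next
  case (cons x H)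
  then obtain y H' where H: "H = y # H'" by (cases H) auto
  have "\<phi> x \<le> \<phi> (sup x y)" "\<phi> y \<le> \<phi> (sup x y)"
    using \<open>mono \<phi>\<close> by (auto intro: monoD)
  then show ?case using cons.IH by (simp add: H path_val_Cons_Cons)
qed

lemma finite_path_vals: "finite {path_val \<phi> H | H. is_path (a::'a::{finite,lattice}) b H}"
proof -
  have "finite {xs::'a list. set xs \<subseteq> UNIV \<and> distinct xs}"
    by (rule finite_subset_distinct) simp
  moreover have "{path_val \<phi> H | H. is_path a b H}
      \<subseteq> path_val \<phi> ` {xs. set xs \<subseteq> UNIV \<and> distinct xs}"
    by (auto simp: is_path_def)
  ultimately show ?thesis by (meson finite_imageI finite_subset)
qed

lemma ex_is_path: "\<exists>H. is_path a b H"
  by (cases "a = b") (auto simp: is_path_def intro: exI[of _ "[a]"] exI[of _ "[a, b]"])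

lemma is_path_Cons: "is_path a b H \<Longrightarrow> \<exists>T. H = a # T"
  by (cases H) (auto simp: is_path_def)

lemma is_path_same: "is_path b b H \<Longrightarrow> H = [b]"
  by (cases H) (auto simp: is_path_def dest!: last_in_set split: if_splits)

lemma path_val_le_lam: "is_path a b H \<Longrightarrow> path_val \<phi> H \<le> lam \<phi> a b"
  unfolding lam_def by (rule Max_ge[OF finite_path_vals]) auto

lemma lam_attained: "\<exists>H. is_path a b H \<and> lam \<phi> a b = path_val \<phi> H"
proof -
  have "lam \<phi> a b \<in> {path_val \<phi> H | H. is_path a b H}"
    unfolding lam_def using ex_is_path[of a b] by (intro Max_in[OF finite_path_vals]) auto
  then show ?thesis by auto
qed

lemma lam_same: "lam \<phi> b b = \<phi> b"
  using lam_attained[of b b \<phi>] is_path_same by fastforce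

lemma lam_le: "mono \<phi> \<Longrightarrow> lam \<phi> x b \<le> \<phi> x"
  using lam_attained[of x b \<phi>] path_val_le_hd_last[of \<phi>] by (force simp: is_path_def)

text \<open>
  A path from \<open>x\<close> either avoids \<open>y \<ge> x\<close>, and then may be prefixed by \<open>y\<close> at no cost,
  or passes through \<open>y\<close>, and then cutting off the part before \<open>y\<close> does not decrease its value.
\<close>
lemma mono_lam:
  assumes "mono \<phi>"
  shows "mono (\<lambda>x. lam \<phi> x b)"
proof (rule monoI)
  fix x y :: 'a assume "x \<le> y"
  obtain H where H: "is_path x b H" "lam \<phi> x b = path_val \<phi> H"
    using lam_attained by blast
  show "lam \<phi> x b \<le> lam \<phi> y b"
  proof (cases "y \<in> set H")
    case False
    obtain T where "H = x # T" using is_path_Cons[OF H(1)] ..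
    then have "path_val \<phi> (y # H) = path_val \<phi> H"
      using \<open>x \<le> y\<close> by (simp add: path_val_Cons_Cons sup_absorb1)
    moreover have "is_path y b (y # H)" using H False by (auto simp: is_path_def)
    ultimately show ?thesis using path_val_le_lam H(2) by metis
  next
    case True
    then obtain P Q where PQ: "H = P @ y # Q" by (meson split_list)
    have "path_val \<phi> (P @ [y]) \<le> \<phi> y"
      using path_val_le_hd_last[OF assms, of "P @ [y]"] by simp
    then have "path_val \<phi> H \<le> path_val \<phi> (y # Q)"
      using path_val_append_Cons[of \<phi> P y Q] PQ by simp
    moreover have "is_path y b (y # Q)" using H PQ by (auto simp: is_path_def)
    ultimately show ?thesis using path_val_le_lam H(2) by (metis order_trans)
  qed
qed

lemma mono_diff_lam:
  assumes "mono \<phi>"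
  shows "mono (\<lambda>x. \<phi> x - lam \<phi> x b)"
proof (rule monoI)
  fix x y :: 'a assume "x \<le> y"
  obtain H where H: "is_path y b H" "lam \<phi> y b = path_val \<phi> H"
    using lam_attained by blast
  obtain T where HT: "H = y # T" using is_path_Cons[OF H(1)] ..
  show "\<phi> x - lam \<phi> x b \<le> \<phi> y - lam \<phi> y b"
  proof (cases "x \<in> set H")
    case False
    have "path_val \<phi> (x # H) = \<phi> x + path_val \<phi> H - \<phi> y"
      using \<open>x \<le> y\<close> by (simp add: HT path_val_Cons_Cons sup_absorb2)
    moreover have "is_path x b (x # H)" using H False by (auto simp: is_path_def)
    ultimately show ?thesis using path_val_le_lam[of x b "x # H" \<phi>] H(2) by simp
  next
    case True
    then obtain P Q where PQ: "H = P @ x # Q" by (meson split_list)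
    have "hd (P @ [x]) = y" using PQ HT by (cases P) auto
    then have "path_val \<phi> (P @ [x]) \<le> \<phi> y"
      using path_val_le_hd_last[OF assms, of "P @ [x]"] by simp
    then have "path_val \<phi> H \<le> path_val \<phi> (x # Q) - \<phi> x + \<phi> y"
      using path_val_append_Cons[of \<phi> P x Q] PQ by simp
    moreover have "is_path x b (x # Q)" using H PQ by (auto simp: is_path_def)
    ultimately show ?thesis using path_val_le_lam[of x b "x # Q" \<phi>] H(2) by simp
  qed
qed

lemma lam_nonneg:
  fixes \<phi> :: "'a::{finite,lattice} \<Rightarrow> real"
  assumes "mono \<phi>" and "\<forall>x. 0 \<le> \<phi> x"
  shows "0 \<le> lam \<phi> x b"
proof -
  define z :: 'a where "z = Inf_fin UNIV"
  have z_le: "z \<le> y" for y unfolding z_def by (rule Inf_fin.coboundedI) auto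
  have "\<phi> z \<le> lam \<phi> z b"
  proof (cases "z = b")
    case True
    then show ?thesis by (simp add: lam_same)
  next
    case False
    then have "is_path z b [z, b]" by (simp add: is_path_def)
    moreover have "path_val \<phi> [z, b] = \<phi> z"
      using z_le[of b] by (simp add: path_val_Cons_Cons sup_absorb2)
    ultimately show ?thesis using path_val_le_lam by metis
  qed
  also have "\<dots> \<le> lam \<phi> x b" using mono_lam[OF assms(1)] z_le by (auto dest: monoD)
  finally show ?thesis using assms(2) order_trans by blast
qed

lemma upcl_insert: "upcl (insert x A) = upcl {x} \<union> upcl A"
  by (auto simp: upcl_def)

lemma upcl_singleton: "upcl {x} = {y. x \<le> y}"
  by (auto simp: upcl_def)

lemma upcl_in_upsets: "A \<noteq> {} \<Longrightarrow> upcl A \<in> upsets"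
  by (auto simp: upcl_def upsets_def intro: order_trans)

lemma upsets_nonempty: "W \<in> upsets \<Longrightarrow> W \<noteq> {}"
  by (simp add: upsets_def)

lemma Int_in_upsets: "A \<in> upsets \<Longrightarrow> B \<in> upsets \<Longrightarrow> A \<inter> B \<noteq> {} \<Longrightarrow> A \<inter> B \<in> upsets"
  by (auto simp: upsets_def)

section \<open>Lower bound\<close>

lemma Minf_nabla_nonneg: "\<Phi> \<in> Minf \<Longrightarrow> set Us \<subseteq> upsets \<Longrightarrow> W \<in> upsets \<Longrightarrow> 0 \<le> nabla Us \<Phi> W"
  by (simp add: Minf_def)

lemma Minf_antimono:
  assumes "\<Phi> \<in> Minf" "V \<in> upsets" "W \<in> upsets" "W \<subseteq> V"
  shows "\<Phi> V \<le> \<Phi> W"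
proof -
  have "0 \<le> nabla [V] \<Phi> W" using assms by (intro Minf_nabla_nonneg) auto
  moreover have "W \<union> V = V" using assms(4) by auto
  ultimately show ?thesis by simp
qed

lemma Minf_supermodular:
  assumes "\<Phi> \<in> Minf" "A \<in> upsets" "B \<in> upsets" "A \<inter> B \<noteq> {}"
  shows "\<Phi> A + \<Phi> B \<le> \<Phi> (A \<union> B) + \<Phi> (A \<inter> B)"
proof -
  have "0 \<le> nabla [A, B] \<Phi> (A \<inter> B)"
    using assms Int_in_upsets by (intro Minf_nabla_nonneg) auto
  moreover have "A \<inter> B \<union> B = B" "A \<inter> B \<union> A = A" "A \<inter> B \<union> A \<union> B = A \<union> B" by auto
  ultimately show ?thesis by simp
qed

lemma path_val_le_Minf_upcl:
  assumes "\<Phi> \<in> Minf" and ext: "\<forall>x. \<Phi> (upcl {x}) = \<phi> x"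
  shows "path_val \<phi> (x # H) \<le> \<Phi> (upcl (set (x # H)))"
proof (induction H arbitrary: x)
  case Nil
  then show ?case using ext by simp
next
  case (Cons y H)
  let ?A = "upcl {x}" and ?B = "upcl (set (y # H))"
  have A: "?A \<in> upsets" and B: "?B \<in> upsets" by (auto intro: upcl_in_upsets)
  have "sup x y \<in> ?A \<inter> ?B" by (auto simp: upcl_def)
  then have AB: "?A \<inter> ?B \<noteq> {}" by blast
  have "upcl {sup x y} \<subseteq> ?A \<inter> ?B" by (auto simp: upcl_def intro: order_trans)
  then have "\<Phi> (?A \<inter> ?B) \<le> \<phi> (sup x y)"
    using Minf_antimono[OF assms(1) Int_in_upsets[OF A B AB] upcl_in_upsets[of "{sup x y}"]] ext
    by simp
  moreover have "?A \<union> ?B = upcl (set (x # y # H))" using upcl_insert[of x "set (y # H)"] by simp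
  ultimately show ?case
    using Minf_supermodular[OF assms(1) A B AB] Cons.IH[of y] ext
    by (simp add: path_val_Cons_Cons)
qed

lemma lam_le_Minf:
  assumes "\<Phi> \<in> Minf" and "\<forall>x. \<Phi> (upcl {x}) = \<phi> x"
  shows "lam \<phi> a b \<le> \<Phi> (upcl {a, b})"
proof -
  obtain H where H: "is_path a b H" "lam \<phi> a b = path_val \<phi> H"
    using lam_attained by blast
  obtain T where HT: "H = a # T" using is_path_Cons[OF H(1)] ..
  have "b \<in> set H" using H(1) by (auto simp: is_path_def)
  then have "upcl {a, b} \<subseteq> upcl (set H)" using HT by (auto simp: upcl_def)
  then have "\<Phi> (upcl (set H)) \<le> \<Phi> (upcl {a, b})"
    using Minf_antimono[OF assms(1) upcl_in_upsets upcl_in_upsets] HT by simp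
  then show ?thesis using path_val_le_Minf_upcl[OF assms, of a T] H HT by simp
qed

section \<open>Minima over up-sets\<close>

definition Min_on :: "('a::finite \<Rightarrow> real) \<Rightarrow> 'a set \<Rightarrow> real" where
  "Min_on f W = (if W = {} then 0 else Min (f ` W))"

lemma Min_on_nonneg: "\<forall>x. 0 \<le> f x \<Longrightarrow> 0 \<le> Min_on f W"
  by (auto simp: Min_on_def)

lemma Min_on_Un:
  "W \<noteq> {} \<Longrightarrow> U \<noteq> {} \<Longrightarrow> Min_on f (W \<union> U) = min (Min_on f W) (Min_on f U)"
  by (simp add: Min_on_def image_Un Min_Un)

lemma Min_on_upcl_singleton:
  assumes "mono f"
  shows "Min_on f (upcl {x}) = f x"
proof -
  have "Min (f ` {y. x \<le> y}) = f x"
    using assms by (intro Min_eqI) (auto simp: mono_def)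
  then show ?thesis by (auto simp: Min_on_def upcl_singleton)
qed

lemma Min_on_upcl_pair:
  assumes "mono f"
  shows "Min_on f (upcl {x, y}) = min (f x) (f y)"
proof -
  have "upcl {x} \<noteq> {}" "upcl {y} \<noteq> {}" by (auto simp: upcl_def)
  then show ?thesis
    using Min_on_Un[of "upcl {x}" "upcl {y}" f] Min_on_upcl_singleton[OF assms] upcl_insert[of x "{y}"]
    by simp
qed

lemma nabla_Min_on:
  assumes "\<forall>x. 0 \<le> f x" and "W \<noteq> {}" and "\<forall>U\<in>set Us. U \<noteq> {}"
  shows "nabla Us (Min_on f) W = max 0 (Min_on f W - Max (insert 0 (Min_on f ` set Us)))"
  using assms(2,3)
proof (induction Us arbitrary: W)
  case Nil
  then show ?case using Min_on_nonneg[OF assms(1)] by simp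
next
  case (Cons U Us)
  define M where "M = Max (insert 0 (Min_on f ` set Us))"
  have "0 \<le> M" unfolding M_def by simp
  have "max 0 (w - M) - max 0 (min w u - M) = max 0 (w - max u M)" for w u :: real
    using \<open>0 \<le> M\<close> by (auto simp: max_def min_def)
  moreover have "Max (insert 0 (Min_on f ` set (U # Us))) = max (Min_on f U) M"
    unfolding M_def
    using Max.insert[of "insert 0 (Min_on f ` set Us)" "Min_on f U"] by (simp add: insert_commute)
  ultimately show ?case using Cons by (simp add: Min_on_Un M_def)
qed

lemma Min_on_in_Minf:
  assumes "\<forall>x. 0 \<le> f x"
  shows "Min_on f \<in> Minf"
  unfolding Minf_def
proof (intro CollectI conjI ballI allI impI)
  fix Us :: "'a set list" and W :: "'a set"
  assume "set Us \<subseteq> upsets" "W \<in> upsets"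
  then have "W \<noteq> {}" "\<forall>U\<in>set Us. U \<noteq> {}" using upsets_nonempty by auto
  then show "0 \<le> nabla Us (Min_on f) W" by (simp add: nabla_Min_on[OF assms])
qed (rule Min_on_nonneg[OF assms])

lemma nabla_add: "nabla Us (\<lambda>W. F W + G W) W = nabla Us F W + nabla Us G W"
  by (induction Us arbitrary: W) auto

lemma add_in_Minf: "F \<in> Minf \<Longrightarrow> G \<in> Minf \<Longrightarrow> (\<lambda>W. F W + G W) \<in> Minf"
  by (simp add: Minf_def nabla_add)

section \<open>The extremal extension\<close>

lemma Bphi_eqI:
  assumes "\<Phi> \<in> Minf" and "\<forall>x. \<Phi> (upcl {x}) = \<phi> x" and "\<Phi> U = r"
    and "\<And>\<Psi>. \<Psi> \<in> Minf \<Longrightarrow> \<forall>x. \<Psi> (upcl {x}) = \<phi> x \<Longrightarrow> r \<le> \<Psi> U"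
  shows "Bphi \<phi> U = r"
  unfolding Bphi_def using assms by (intro Least_equality) auto

definition lam_extension :: "('a::{finite,lattice} \<Rightarrow> real) \<Rightarrow> 'a \<Rightarrow> 'a set \<Rightarrow> real" where
  "lam_extension \<phi> b W = Min_on (\<lambda>x. lam \<phi> x b) W + Min_on (\<lambda>x. \<phi> x - lam \<phi> x b) W"

lemma lam_extension_in_Minf: "\<phi> \<in> M1 \<Longrightarrow> lam_extension \<phi> b \<in> Minf"
  unfolding lam_extension_def M1_def
  by (intro add_in_Minf Min_on_in_Minf) (auto intro: lam_nonneg simp: lam_le)

lemma lam_extension_upcl_singleton: "\<phi> \<in> M1 \<Longrightarrow> lam_extension \<phi> b (upcl {x}) = \<phi> x"
  unfolding lam_extension_def M1_def
  by (simp add: Min_on_upcl_singleton mono_lam mono_diff_lam)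

lemma lam_extension_upcl_pair: "\<phi> \<in> M1 \<Longrightarrow> lam_extension \<phi> b (upcl {a, b}) \<le> lam \<phi> a b"
  unfolding lam_extension_def M1_def
  by (simp add: Min_on_upcl_pair mono_lam mono_diff_lam lam_same)

theorem proposition3p12:
  fixes \<phi> :: "'a::{finite,lattice} \<Rightarrow> real"
  assumes "\<phi> \<in> M1"
  shows "\<forall>a b. lam \<phi> a b = Bphi \<phi> (upcl {a, b})"
proof (intro allI)
  fix a b
  have "lam_extension \<phi> b \<in> Minf" and ext: "\<forall>x. lam_extension \<phi> b (upcl {x}) = \<phi> x"
    using assms by (simp_all add: lam_extension_in_Minf lam_extension_upcl_singleton)
  moreover have "lam_extension \<phi> b (upcl {a, b}) = lam \<phi> a b"
    using lam_extension_upcl_pair[OF assms] lam_le_Minf[OF \<open>_ \<in> Minf\<close> ext] antisym by blast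
  ultimately show "lam \<phi> a b = Bphi \<phi> (upcl {a, b})"
    by (metis Bphi_eqI lam_le_Minf)
qed

end
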